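(* Let $\lambda_1,\lambda_2$ and $\Omega$ be as in the context, let $(c,\theta)\in\Omega$, $D=\sin\theta/c$, and let $\varphi$ be the solution of $$\varphi'(u)=\sqrt{c^2+2\cos\theta\,B-D^2B^2},\qquad \varphi(0)=0,\qquad\text{where } B=\lambda_1^2\cos^2\varphi(u)+\lambda_2^2\sin^2\varphi(u).$$ Then: (1) $\varphi$ is a well-defined increasing bijection from $\mathbb{R}$ to $\mathbb{R}$; (2) $\varphi$ is odd; (3) there exists a real number $U>0$ such that $\varphi(u+U)=\varphi(u)+\pi$ for all $u\in\mathbb{R}$; (4) $\varphi(kU)=k\pi$ for all $k\in\mathbb{Z}$; (5) $\varphi(kU/2)=k\pi/2$ for all odd integers $k$.
   Context: Either $\lambda_1>\lambda_2>0$ or $\lambda_1=\lambda_2=1$. For $c>0$ put $\theta_c^+=\pi$ if $c>\sqrt2\lambda_1$ and $\theta_c^+=\arccos(1-c^2/\lambda_1^2)\in(0,\pi]$ if $0<c\le\sqrt2\lambda_1$. $\Omega=\{(c,\theta)\in\mathbb{R}^2: c>0,\ \theta\in(-\theta_c^+,\theta_c^+)\}$. *)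

theory Defs
  imports "HOL-Analysis.Analysis"
begin

definition lambda_ok :: "real \<Rightarrow> real \<Rightarrow> bool" where
  "lambda_ok l1 l2 \<longleftrightarrow> (l1 > l2 \<and> l2 > 0) \<or> (l1 = 1 \<and> l2 = 1)"

definition theta_plus :: "real \<Rightarrow> real \<Rightarrow> real" where
  "theta_plus l1 c = (if c > sqrt 2 * l1 then pi else arccos (1 - c\<^sup>2 / l1\<^sup>2))"

definition Omega :: "real \<Rightarrow> (real \<times> real) set" where
  "Omega l1 = {(c, \<theta>). c > 0 \<and> - theta_plus l1 c < \<theta> \<and> \<theta> < theta_plus l1 c}"

definition Bfun :: "real \<Rightarrow> real \<Rightarrow> real \<Rightarrow> real" where
  "Bfun l1 l2 p = l1\<^sup>2 * (cos p)\<^sup>2 + l2\<^sup>2 * (sin p)\<^sup>2"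

definition rhs :: "real \<Rightarrow> real \<Rightarrow> real \<Rightarrow> real \<Rightarrow> real \<Rightarrow> real" where
  "rhs l1 l2 c \<theta> p =
     sqrt (c\<^sup>2 + 2 * cos \<theta> * Bfun l1 l2 p - (sin \<theta> / c)\<^sup>2 * (Bfun l1 l2 p)\<^sup>2)"

definition is_solution :: "real \<Rightarrow> real \<Rightarrow> real \<Rightarrow> real \<Rightarrow> (real \<Rightarrow> real) \<Rightarrow> bool" where
  "is_solution l1 l2 c \<theta> \<phi> \<longleftrightarrow>
     \<phi> 0 = 0 \<and> (\<forall>u. (\<phi> has_real_derivative rhs l1 l2 c \<theta> (\<phi> u)) (at u))"

end

theory Submission
  imports Defs
begin

text \<open>The equation is autonomous, \<phi>' = F \<phi>, with F continuous, positive, bounded, even and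
  \<pi>-periodic. Positivity is where \<Omega> enters: c^2 times the radicand equals
  (c^2 + B cos \<theta>)^2 - B^2, and B (1 - cos \<theta>) \<le> \<lambda>1^2 (1 - cos \<theta>) < c^2.
  An antiderivative H of 1/F (the time map) is then an increasing bijection of \<real> with
  H (\<phi> u) = u along every solution, so the solution exists, is unique and is the inverse of H.
  Uniqueness transfers the symmetries of F to \<phi>: both u \<mapsto> - \<phi> (- u) and, for \<phi> U = \<pi>,
  u \<mapsto> \<phi> (u + U) - \<pi> solve the same problem. Oddness and the shift together force
  \<phi> (U/2) = \<pi>/2.\<close>

lemma real_antiderivative_from_zero:
  fixes g :: "real \<Rightarrow> real"
  assumes "continuous_on UNIV g"
  obtains H where "H 0 = 0" "\<And>x. (H has_real_derivative g x) (at x)"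
proof -
  obtain G where G: "\<And>x. (G has_vector_derivative g x) (at x)"
    using einterval_antiderivative[of "-\<infinity>" "\<infinity>" g] assms
    by (auto simp: continuous_on_eq_continuous_at)
  have "((\<lambda>x. G x - G 0) has_real_derivative g x) (at x)" for x
    using G[of x] by (auto simp: has_real_derivative_iff_has_vector_derivative intro!: derivative_eq_intros)
  with that[of "\<lambda>x. G x - G 0"] show thesis by simp
qed

lemma DERIV_pos_imp_strict_mono:
  fixes f f' :: "real \<Rightarrow> real"
  assumes "\<And>x. (f has_real_derivative f' x) (at x)" and "\<And>x. f' x > 0"
  shows "strict_mono f"
proof (rule strict_monoI)
  fix x y :: real
  assume "x < y"
  then show "f x < f y"
    by (rule DERIV_pos_imp_increasing) (use assms in blast)
qed

lemma shift_of_int_multiple: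
  fixes f :: "'a::ring_1 \<Rightarrow> 'b::ring_1"
  assumes shift: "\<And>x. f (x + U) = f x + T"
  shows "f (x + of_int k * U) = f x + of_int k * T"
proof (induction k rule: int_induct[where k = 0])
  case (step1 i)
  have "f (x + of_int (i + 1) * U) = f ((x + of_int i * U) + U)" by (simp add: algebra_simps)
  also have "\<dots> = f (x + of_int i * U) + T" by (rule shift)
  also have "\<dots> = f x + of_int (i + 1) * T" using step1 by (simp add: algebra_simps)
  finally show ?case .
next
  case (step2 i)
  have "f (x + of_int i * U) = f ((x + of_int (i - 1) * U) + U)" by (simp add: algebra_simps)
  also have "\<dots> = f (x + of_int (i - 1) * U) + T" by (rule shift)
  finally show ?case using step2 by (simp add: algebra_simps)
qed simp

lemma odd_quasi_periodic_multiples: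
  fixes f :: "'a::field_char_0 \<Rightarrow> 'b::linordered_field"
  assumes shift: "\<And>x. f (x + U) = f x + T" and odd: "\<And>x. f (- x) = - f x"
  shows "f (of_int k * U) = of_int k * T"
    and "odd k \<Longrightarrow> f (of_int k * U / 2) = of_int k * T / 2"
proof -
  have "f 0 = 0" using odd[of 0] by simp
  then show "f (of_int k * U) = of_int k * T"
    using shift_of_int_multiple[where f = f, OF shift, of 0 k] by simp
  have "f (U / 2) = - f (U / 2) + T"
    using shift[of "- (U / 2)"] odd[of "U / 2"] by simp
  then have half: "f (U / 2) = T / 2" by linarith
  assume "odd k"
  then obtain m where "k = 2 * m + 1" by (rule oddE)
  then have "of_int k * U / 2 = U / 2 + of_int m * U" "of_int k * T / 2 = T / 2 + of_int m * T"
    by (simp_all add: field_simps)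
  then show "f (of_int k * U / 2) = of_int k * T / 2"
    by (simp only: shift_of_int_multiple[where f = f, OF shift] half)
qed

locale positive_autonomous_ode =
  fixes F :: "real \<Rightarrow> real"
  assumes continuous_F: "continuous_on UNIV F"
    and F_pos: "\<And>p. F p > 0"
begin

definition solution :: "(real \<Rightarrow> real) \<Rightarrow> bool" where
  "solution \<phi> \<longleftrightarrow> (\<forall>u. (\<phi> has_real_derivative F (\<phi> u)) (at u))"

lemma time_map_exists:
  obtains H where "H 0 = 0" "\<And>p. (H has_real_derivative inverse (F p)) (at p)"
proof -
  have "continuous_on UNIV (\<lambda>p. inverse (F p))"
    using continuous_F F_pos by (intro continuous_on_inverse) (auto simp: less_imp_neq[symmetric])
  then show thesis using that by (rule real_antiderivative_from_zero)
qed

lemma time_map_along_solution: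
  assumes H: "\<And>p. (H has_real_derivative inverse (F p)) (at p)" and "solution \<phi>"
  shows "H (\<phi> u) = u + H (\<phi> 0)"
proof -
  have "((\<lambda>u. H (\<phi> u) - u) has_real_derivative 0) (at u)" for u
  proof -
    have "(\<phi> has_real_derivative F (\<phi> u)) (at u)"
      using \<open>solution \<phi>\<close> by (simp add: solution_def)
    then have "((\<lambda>u. H (\<phi> u) - u) has_real_derivative inverse (F (\<phi> u)) * F (\<phi> u) - 1) (at u)"
      by (intro DERIV_diff DERIV_chain2[OF H] DERIV_ident)
    then show ?thesis using F_pos[of "\<phi> u"] by simp
  qed
  then have "H (\<phi> u) - u = H (\<phi> 0) - 0"
    by (intro DERIV_isconst_all allI)
  then show ?thesis by simp
qed

lemma solution_unique:
  assumes "solution \<phi>" "solution \<psi>" "\<phi> 0 = \<psi> 0"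
  shows "\<phi> = \<psi>"
proof
  fix u
  obtain H where H: "\<And>p. (H has_real_derivative inverse (F p)) (at p)"
    using time_map_exists by metis
  have "strict_mono H"
    by (rule DERIV_pos_imp_strict_mono[OF H]) (simp add: F_pos)
  moreover have "H (\<phi> u) = H (\<psi> u)"
    using time_map_along_solution[OF H assms(1), of u] time_map_along_solution[OF H assms(2), of u]
      assms(3) by simp
  ultimately show "\<phi> u = \<psi> u" by (metis strict_mono_eq)
qed

lemma solution_strict_mono:
  assumes "solution \<phi>"
  shows "strict_mono \<phi>"
  using assms unfolding solution_def
  by (intro DERIV_pos_imp_strict_mono[where f' = "\<lambda>u. F (\<phi> u)"]) (auto simp: F_pos)

text \<open>An upper bound on the speed rules out blow-up: the time map then grows at least
  linearly, so its inverse, the solution, is defined on all of \<real>.\<close>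
lemma solution_exists:
  assumes F_le: "\<And>p. F p \<le> M"
  obtains \<phi> where "solution \<phi>" "\<phi> 0 = 0" "bij \<phi>"
proof -
  obtain H where H0: "H 0 = 0" and H: "\<And>p. (H has_real_derivative inverse (F p)) (at p)"
    by (fact time_map_exists)
  have "M > 0" using F_pos F_le by (meson less_le_trans)
  have "strict_mono H"
    by (rule DERIV_pos_imp_strict_mono[OF H]) (simp add: F_pos)
  have H_cont: "isCont H p" for p using H by (rule DERIV_isCont)
  have H_growth: "(b - a) / M \<le> H b - H a" if "a \<le> b" for a b
  proof (cases "a = b")
    case False
    with that have "a < b" by simp
    then have "\<exists>z. a < z \<and> z < b \<and> H b - H a = (b - a) * inverse (F z)"
      by (rule MVT2) (rule H)
    then obtain z where mvt: "H b - H a = (b - a) * inverse (F z)" by blast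
    have "(b - a) / M = (b - a) * inverse M" by (simp add: divide_inverse)
    also have "\<dots> \<le> (b - a) * inverse (F z)"
      using \<open>a < b\<close> by (intro mult_left_mono le_imp_inverse_le[OF F_le F_pos]) simp
    also have "\<dots> = H b - H a" by (rule mvt[symmetric])
    finally show ?thesis .
  qed simp
  have "surj H"
  proof (rule surjI)
    fix y
    define r where "r = M * \<bar>y\<bar>"
    have "0 \<le> r" "r / M = \<bar>y\<bar>" using \<open>M > 0\<close> by (simp_all add: r_def)
    then have "H (- r) \<le> y" "y \<le> H r"
      using H_growth[of "- r" 0] H_growth[of 0 r] H0 by auto
    then have "\<exists>x. H x = y"
      using IVT[of H "- r" y r] H_cont \<open>0 \<le> r\<close> by fastforce
    then show "H (inv H y) = y" by (metis f_inv_into_f rangeI)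
  qed
  have "bij H" using \<open>strict_mono H\<close> \<open>surj H\<close> by (simp add: bij_def strict_mono_imp_inj_on)
  then have H_inv: "H (inv H u) = u" "inv H (H p) = p" for u p
    by (simp_all add: bij_is_surj surj_f_inv_f bij_is_inj)
  have "(inv H has_real_derivative F (inv H u)) (at u)" for u
  proof -
    have "isCont (inv H) u"
      using isCont_inverse_function[of 1 "inv H u" "inv H" H] H_cont H_inv by simp
    then have "(inv H has_real_derivative inverse (inverse (F (inv H u)))) (at u)"
      using F_pos[of "inv H u"] H_inv
      by (intro DERIV_inverse_function[where a = "u - 1" and b = "u + 1", OF H]) auto
    then show ?thesis by simp
  qed
  moreover have "inv H 0 = 0" using H_inv(2)[of 0] H0 by simp
  moreover have "bij (inv H)" using \<open>bij H\<close> by (rule bij_imp_bij_inv)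
  ultimately show thesis using that[of "inv H"] by (simp add: solution_def)
qed

lemma solution_odd:
  assumes F_even: "\<And>p. F (- p) = F p" and "solution \<phi>" "\<phi> 0 = 0"
  shows "\<phi> (- u) = - \<phi> u"
proof -
  have "((\<lambda>u. - \<phi> (- u)) has_real_derivative F (- \<phi> (- u))) (at u)" for u
  proof -
    have "(\<phi> has_real_derivative F (\<phi> (- u))) (at (- u))"
      using \<open>solution \<phi>\<close> by (simp add: solution_def)
    then have "((\<lambda>u. \<phi> (- u)) has_real_derivative - F (\<phi> (- u))) (at u)"
      by (simp add: DERIV_mirror)
    then have "((\<lambda>u. - \<phi> (- u)) has_real_derivative - (- F (\<phi> (- u)))) (at u)"
      by (rule DERIV_minus)
    then show ?thesis using F_even by simp
  qed
  then have "(\<lambda>u. - \<phi> (- u)) = \<phi>"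
    using assms by (intro solution_unique) (simp_all add: solution_def)
  then show ?thesis by (metis minus_minus)
qed

lemma solution_shift:
  assumes F_periodic: "\<And>p. F (p + T) = F p" and "solution \<phi>" "\<phi> U = \<phi> 0 + T"
  shows "\<phi> (u + U) = \<phi> u + T"
proof -
  have "((\<lambda>u. \<phi> (u + U) - T) has_real_derivative F (\<phi> (u + U) - T)) (at u)" for u
  proof -
    have "(\<phi> has_real_derivative F (\<phi> (u + U))) (at (u + U))"
      using \<open>solution \<phi>\<close> by (simp add: solution_def)
    then have "((\<lambda>u. \<phi> (u + U)) has_real_derivative F (\<phi> (u + U))) (at u)"
      by (simp add: DERIV_shift)
    then have "((\<lambda>u. \<phi> (u + U) - T) has_real_derivative F (\<phi> (u + U)) - 0) (at u)"
      by (rule DERIV_diff) (rule DERIV_const)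
    then show ?thesis using F_periodic[of "\<phi> (u + U) - T"] by simp
  qed
  then have "(\<lambda>u. \<phi> (u + U) - T) = \<phi>"
    using assms by (intro solution_unique) (simp_all add: solution_def)
  then show ?thesis by (metis diff_add_cancel)
qed

end

lemma cos_gt_of_Omega:
  assumes "l1 > 0" and "(c, \<theta>) \<in> Omega l1"
  shows "1 - c\<^sup>2 / l1\<^sup>2 < cos \<theta>"
proof -
  have c: "c > 0" and \<theta>: "\<bar>\<theta>\<bar> < theta_plus l1 c"
    using assms(2) by (auto simp: Omega_def)
  show ?thesis
  proof (cases "c > sqrt 2 * l1")
    case True
    then have "(sqrt 2 * l1)\<^sup>2 < c\<^sup>2" using assms(1) by (intro power_strict_mono) auto
    then have "2 < c\<^sup>2 / l1\<^sup>2" using assms(1) by (simp add: power_mult_distrib field_simps)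
    then show ?thesis using cos_ge_minus_one[of \<theta>] by linarith
  next
    case False
    then have "c\<^sup>2 \<le> (sqrt 2 * l1)\<^sup>2" using c by (intro power_mono) auto
    then have "c\<^sup>2 / l1\<^sup>2 \<le> 2" using assms(1) by (simp add: power_mult_distrib field_simps)
    then have r: "-1 \<le> 1 - c\<^sup>2 / l1\<^sup>2" "1 - c\<^sup>2 / l1\<^sup>2 \<le> 1" by auto
    have tp: "theta_plus l1 c = arccos (1 - c\<^sup>2 / l1\<^sup>2)"
      using False by (simp add: theta_plus_def)
    have "cos (theta_plus l1 c) < cos \<bar>\<theta>\<bar>"
      using \<theta> tp arccos_ubound[OF r] by (intro cos_monotone_0_pi) auto
    then show ?thesis using tp r by (simp add: cos_arccos)
  qed
qed

lemma Bfun_bounds: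
  assumes "lambda_ok l1 l2"
  shows "0 < Bfun l1 l2 p" and "Bfun l1 l2 p \<le> l1\<^sup>2"
proof -
  have l: "0 < l2" "l2 \<le> l1" using assms by (auto simp: lambda_ok_def)
  have B: "Bfun l1 l2 p = l2\<^sup>2 + (l1\<^sup>2 - l2\<^sup>2) * (cos p)\<^sup>2"
    unfolding Bfun_def sin_squared_eq by (simp add: algebra_simps)
  have "0 \<le> l1\<^sup>2 - l2\<^sup>2" using l by (simp add: power_mono)
  moreover have "(cos p)\<^sup>2 \<le> 1" by (simp add: abs_square_le_1 abs_cos_le_one)
  ultimately have "(l1\<^sup>2 - l2\<^sup>2) * (cos p)\<^sup>2 \<le> l1\<^sup>2 - l2\<^sup>2"
    by (simp add: mult_left_le)
  then show "Bfun l1 l2 p \<le> l1\<^sup>2" using B by simp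
  show "0 < Bfun l1 l2 p"
    using B l \<open>0 \<le> l1\<^sup>2 - l2\<^sup>2\<close> by (simp add: add_pos_nonneg)
qed

lemma rhs_radicand_pos:
  fixes c B \<theta> :: real
  assumes "c > 0" "B > 0" "B * (1 - cos \<theta>) < c\<^sup>2"
  shows "0 < c\<^sup>2 + 2 * cos \<theta> * B - (sin \<theta> / c)\<^sup>2 * B\<^sup>2"
proof -
  have "c\<^sup>2 * ((sin \<theta> / c)\<^sup>2 * B\<^sup>2) = (sin \<theta>)\<^sup>2 * B\<^sup>2"
    using assms(1) by (simp add: power_divide)
  then have "c\<^sup>2 * (c\<^sup>2 + 2 * cos \<theta> * B - (sin \<theta> / c)\<^sup>2 * B\<^sup>2) = (c\<^sup>2 + B * cos \<theta>)\<^sup>2 - B\<^sup>2"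
    using sin_cos_squared_add[of \<theta>] by algebra
  moreover have "B\<^sup>2 < (c\<^sup>2 + B * cos \<theta>)\<^sup>2"
    using assms(2,3) by (intro power_strict_mono) (simp_all add: algebra_simps)
  ultimately have "0 < c\<^sup>2 * (c\<^sup>2 + 2 * cos \<theta> * B - (sin \<theta> / c)\<^sup>2 * B\<^sup>2)" by linarith
  then show ?thesis by (rule zero_less_mult_pos) (use assms(1) in simp)
qed

lemma rhs_pos:
  assumes "lambda_ok l1 l2" and "(c, \<theta>) \<in> Omega l1"
  shows "0 < rhs l1 l2 c \<theta> p"
proof -
  have "l1 > 0" "c > 0" using assms by (auto simp: lambda_ok_def Omega_def)
  have "Bfun l1 l2 p * (1 - cos \<theta>) \<le> l1\<^sup>2 * (1 - cos \<theta>)"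
    using Bfun_bounds(2)[OF assms(1)] by (intro mult_right_mono) auto
  also have "\<dots> < c\<^sup>2"
    using cos_gt_of_Omega[OF \<open>l1 > 0\<close> assms(2)] \<open>l1 > 0\<close> by (simp add: field_simps)
  finally show ?thesis
    using rhs_radicand_pos[OF \<open>c > 0\<close> Bfun_bounds(1)[OF assms(1)]] by (simp add: rhs_def)
qed

lemma rhs_le:
  assumes "lambda_ok l1 l2"
  shows "rhs l1 l2 c \<theta> p \<le> sqrt (c\<^sup>2 + 2 * l1\<^sup>2)"
proof -
  have "cos \<theta> * Bfun l1 l2 p \<le> 1 * Bfun l1 l2 p"
    using less_imp_le[OF Bfun_bounds(1)[OF assms]] by (intro mult_right_mono) auto
  moreover have "0 \<le> (sin \<theta> / c)\<^sup>2 * (Bfun l1 l2 p)\<^sup>2" by simp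
  ultimately show ?thesis
    using Bfun_bounds(2)[OF assms, of p] unfolding rhs_def by (intro real_sqrt_le_mono) linarith
qed

lemma rhs_minus [simp]: "rhs l1 l2 c \<theta> (- p) = rhs l1 l2 c \<theta> p"
  by (simp add: rhs_def Bfun_def)

lemma rhs_add_pi [simp]: "rhs l1 l2 c \<theta> (p + pi) = rhs l1 l2 c \<theta> p"
  by (simp add: rhs_def Bfun_def)

lemma continuous_on_rhs: "continuous_on UNIV (rhs l1 l2 c \<theta>)"
  unfolding rhs_def Bfun_def by (intro continuous_intros)

theorem proposition5p1:
  fixes l1 l2 c \<theta> :: real
  assumes "lambda_ok l1 l2"
    and "(c, \<theta>) \<in> Omega l1"
  shows "(\<exists>!\<phi>. is_solution l1 l2 c \<theta> \<phi>) \<and>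
    (\<forall>\<phi>. is_solution l1 l2 c \<theta> \<phi> \<longrightarrow>
       strict_mono \<phi> \<and> bij \<phi> \<and>
       (\<forall>u. \<phi> (- u) = - \<phi> u) \<and>
       (\<exists>U>0. (\<forall>u. \<phi> (u + U) = \<phi> u + pi) \<and>
              (\<forall>k::int. \<phi> (of_int k * U) = of_int k * pi) \<and>
              (\<forall>k::int. odd k \<longrightarrow> \<phi> (of_int k * U / 2) = of_int k * pi / 2)))"
proof -
  interpret positive_autonomous_ode "rhs l1 l2 c \<theta>"
    by unfold_locales (simp_all add: continuous_on_rhs rhs_pos[OF assms])
  obtain \<phi> where \<phi>: "solution \<phi>" "\<phi> 0 = 0" "bij \<phi>"
    by (fact solution_exists[OF rhs_le[OF assms(1)]])
  then have unique: "is_solution l1 l2 c \<theta> \<psi> \<longleftrightarrow> \<psi> = \<phi>" for \<psi>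
    using solution_unique[of \<psi> \<phi>] by (auto simp: is_solution_def solution_def)
  obtain U where "\<phi> U = pi" using bij_is_surj[OF \<phi>(3)] by (metis surjD)
  have mono: "strict_mono \<phi>" using \<phi>(1) by (rule solution_strict_mono)
  then have "0 < U" using \<open>\<phi> U = pi\<close> \<phi>(2) by (metis pi_gt_zero strict_mono_less)
  have odd: "\<phi> (- u) = - \<phi> u" for u by (rule solution_odd) (simp_all add: \<phi>)
  have shift: "\<phi> (u + U) = \<phi> u + pi" for u
    by (rule solution_shift) (simp_all add: \<phi> \<open>\<phi> U = pi\<close>)
  have "\<phi> (of_int k * U) = of_int k * pi" "odd k \<Longrightarrow> \<phi> (of_int k * U / 2) = of_int k * pi / 2"
    for k :: int
    using odd_quasi_periodic_multiples[where f = \<phi>, OF shift odd] by simp_all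
  with mono \<phi>(3) odd shift \<open>0 < U\<close> show ?thesis
    unfolding unique by (simp add: exI[of _ U])
qed

end
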